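(* There exists a $(697,25)$-arc in $\operatorname{PG}(2,29)$; hence $m_{25}(2,29)\ge 697$.
   Context: Points of $\operatorname{PG}(2,q)$ are the 1-dimensional subspaces of $\operatorname{GF}(q)^3$, lines are the 2-dimensional subspaces. An $(n,r)$-arc in $\operatorname{PG}(2,q)$ is a set $\mathcal B$ of $n$ points such that every line contains at most $r$ points of $\mathcal B$ and at least one line contains exactly $r$ points of $\mathcal B$. $m_r(2,q)$ is the maximum $n$ for which an $(n,r)$-arc in $\operatorname{PG}(2,q)$ exists. *)

theory Defs
  imports "HOL-Analysis.Analysis"
begin

text \<open>For F = GF(q) we take an arbitrary finite
  field type with q elements.\<close>

definition pg_points :: "('a::field ^ 3) set set" where
  "pg_points = {S. vec.subspace S \<and> vec.dim S = 1}"

definition pg_lines :: "('a::field ^ 3) set set" where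
  "pg_lines = {S. vec.subspace S \<and> vec.dim S = 2}"

definition is_arc :: "nat \<Rightarrow> nat \<Rightarrow> ('a::field ^ 3) set set \<Rightarrow> bool" where
  "is_arc n r B \<longleftrightarrow>
     B \<subseteq> pg_points \<and> finite B \<and> card B = n \<and>
     (\<forall>L\<in>pg_lines. card {P\<in>B. P \<subseteq> L} \<le> r) \<and>
     (\<exists>L\<in>pg_lines. card {P\<in>B. P \<subseteq> L} = r)"

definition m_arc :: "'a::field itself \<Rightarrow> nat \<Rightarrow> nat" where
  "m_arc _ r = Max {n. \<exists>B :: ('a ^ 3) set set. is_arc n r B}"

end

theory Submission
  imports Defs
begin

text \<open>Over a field of prime order p every point of PG(2,p) is (x : y : 1), (x : 1 : 0) or
  (1 : 0 : 0) with x, y residues mod p, and every line is x = i y + k z, y = j z or z = 0.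
  Take all points and punch holes: delete (x : y : 1) when x lies in a set H y, and (x : 1 : 0)
  when x lies in a set H_inf. The number of surviving points on each line is then an explicit
  count: on x = i y + k z it is the number of columns y with (i y + k) mod p outside H y, plus one
  if i is not in H_inf; on y = j z it is p - |H j| + 1; on z = 0 it is p - |H_inf| + 1.
  For p = 29 suitable hole sets remove 168 + 6 points, leaving 697, and checking the
  29 * 29 + 29 + 1 counts against 25 is a finite computation.\<close>

section \<open>Coordinates and lines of the projective plane\<close>

definition v3 :: "'a::zero \<Rightarrow> 'a \<Rightarrow> 'a \<Rightarrow> 'a ^ 3" where
  "v3 x y z = vector [x, y, z]"

lemma v3_nth [simp]: "v3 x y z $ 1 = x" "v3 x y z $ 2 = y" "v3 x y z $ 3 = z"
  unfolding v3_def by simp_all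

lemma vec3_eq_iff: "(u :: 'a ^ 3) = v \<longleftrightarrow> u$1 = v$1 \<and> u$2 = v$2 \<and> u$3 = v$3"
  by (simp add: vec_eq_iff forall_3)

lemma v3_eq_iff [simp]: "v3 a b c = v3 x y z \<longleftrightarrow> a = x \<and> b = y \<and> c = z"
  by (simp add: vec3_eq_iff)

lemma nonzero_vec3_cases: "(a :: 'a::zero ^ 3) \<noteq> 0 \<Longrightarrow> a$1 \<noteq> 0 \<or> a$2 \<noteq> 0 \<or> a$3 \<noteq> 0"
  by (auto simp: vec3_eq_iff)

definition dot3 :: "'a::comm_ring ^ 3 \<Rightarrow> 'a ^ 3 \<Rightarrow> 'a" where
  "dot3 a v = a$1 * v$1 + a$2 * v$2 + a$3 * v$3"

definition kernel3 :: "'a::field ^ 3 \<Rightarrow> ('a ^ 3) set" where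
  "kernel3 a = {v. dot3 a v = 0}"

lemma dot3_v3 [simp]: "dot3 a (v3 x y z) = a$1 * x + a$2 * y + a$3 * z"
  by (simp add: dot3_def)

lemma dot3_scale_left: "dot3 (c *s a) v = c * dot3 a v"
  and dot3_scale_right: "dot3 a (c *s v) = c * dot3 a v"
  and dot3_add_right: "dot3 a (u + v) = dot3 a u + dot3 a v"
  and dot3_zero_right: "dot3 a 0 = 0"
  by (simp_all add: dot3_def algebra_simps)

lemma subspace_kernel3: "vec.subspace (kernel3 a)"
  unfolding vec.subspace_def kernel3_def by (simp add: dot3_scale_right dot3_add_right dot3_zero_right)

lemma dim_kernel3_le_2:
  assumes "(a :: 'a::field ^ 3) \<noteq> 0"
  shows "vec.dim (kernel3 a) \<le> 2"
proof -
  have "vec.dim (kernel3 a) \<le> 3"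
    using vec.dim_subset_UNIV[of "kernel3 a"] by (simp add: vec.dimension_def card_cart_basis)
  moreover have "vec.dim (kernel3 a) \<noteq> 3"
  proof
    assume "vec.dim (kernel3 a) = 3"
    then have "vec.span (kernel3 a) = UNIV"
      using vec.dim_eq_full[of "kernel3 a"] by (simp add: vec.dimension_def card_cart_basis)
    then have "kernel3 a = UNIV"
      using subspace_kernel3 vec.span_eq_iff by blast
    then have "v3 1 0 0 \<in> kernel3 a" "v3 0 1 0 \<in> kernel3 a" "v3 0 0 1 \<in> kernel3 a"
      by simp_all
    then show False
      using nonzero_vec3_cases[OF assms] by (auto simp: kernel3_def)
  qed
  ultimately show ?thesis by simp
qed

definition cross3 :: "'a::comm_ring ^ 3 \<Rightarrow> 'a ^ 3 \<Rightarrow> 'a ^ 3" where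
  "cross3 u v = v3 (u$2 * v$3 - u$3 * v$2) (u$3 * v$1 - u$1 * v$3) (u$1 * v$2 - u$2 * v$1)"

lemma cross3_eq_0_imp_dependent:
  fixes u v :: "'a::field ^ 3"
  assumes "cross3 u v = 0" and "u \<noteq> v"
  shows "vec.dependent {u, v}"
proof (cases "u = 0")
  case True
  then show ?thesis by (simp add: vec.dependent_zero)
next
  case False
  have e1: "u$2 * v$3 = u$3 * v$2" and e2: "u$3 * v$1 = u$1 * v$3" and e3: "u$1 * v$2 = u$2 * v$1"
    using assms(1) by (simp_all add: cross3_def vec3_eq_iff)
  obtain c where c: "v = c *s u"
    using nonzero_vec3_cases[OF False]
  proof (elim disjE)
    assume "u$1 \<noteq> 0"
    with e2 e3 show thesis by (intro that[of "v$1 / u$1"]) (simp add: vec3_eq_iff field_simps)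
  next
    assume "u$2 \<noteq> 0"
    with e1 e3 show thesis by (intro that[of "v$2 / u$2"]) (simp add: vec3_eq_iff field_simps)
  next
    assume "u$3 \<noteq> 0"
    with e1 e2 show thesis by (intro that[of "v$3 / u$3"]) (simp add: vec3_eq_iff field_simps)
  qed
  then have "v \<in> vec.span ({u, v} - {v})"
    using assms(2) by (simp add: vec.span_scale vec.span_base insert_Diff_if)
  then show ?thesis unfolding vec.dependent_def by blast
qed

lemma pg_line_eq_kernel3:
  assumes "(L :: ('a::field ^ 3) set) \<in> pg_lines"
  obtains a where "a \<noteq> 0" "L = kernel3 a"
proof -
  have L: "vec.subspace L" "vec.dim L = 2" using assms by (auto simp: pg_lines_def)
  obtain B where B: "B \<subseteq> L" "vec.independent B" "L \<subseteq> vec.span B" "card B = vec.dim L"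
    using vec.basis_exists by blast
  then obtain u v where uv: "B = {u, v}" "u \<noteq> v" using L(2) by (auto simp: card_2_iff)
  have a0: "cross3 u v \<noteq> 0"
    using cross3_eq_0_imp_dependent[OF _ uv(2)] B(2) uv(1) by blast
  have "B \<subseteq> kernel3 (cross3 u v)"
    by (auto simp: uv(1) kernel3_def cross3_def dot3_def algebra_simps)
  then have "L \<subseteq> kernel3 (cross3 u v)"
    using B(3) vec.span_minimal[OF _ subspace_kernel3] by blast
  then have "L = kernel3 (cross3 u v)"
    using vec.subspace_dim_equal[OF L(1) subspace_kernel3] dim_kernel3_le_2[OF a0] L(2) by simp
  with a0 show thesis by (rule that)
qed

lemma kernel3_v3_0_1_in_pg_lines: "kernel3 (v3 0 1 c :: 'a::field ^ 3) \<in> pg_lines"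
proof -
  define u where "u = (v3 1 0 0 :: 'a ^ 3)"
  define v where "v = (v3 0 (- c) 1 :: 'a ^ 3)"
  have "kernel3 (v3 0 1 c) = vec.span {u, v}"
  proof
    show "vec.span {u, v} \<subseteq> kernel3 (v3 0 1 c)"
      by (rule vec.span_minimal[OF _ subspace_kernel3]) (auto simp: kernel3_def u_def v_def)
  next
    show "kernel3 (v3 0 1 c) \<subseteq> vec.span {u, v}"
    proof
      fix x :: "'a ^ 3" assume "x \<in> kernel3 (v3 0 1 c)"
      then have "x$2 = - c * x$3"
        by (simp add: kernel3_def dot3_def eq_neg_iff_add_eq_0)
      then have "x = x$1 *s u + x$3 *s v"
        by (simp add: vec3_eq_iff u_def v_def)
      moreover have "x$1 *s u + x$3 *s v \<in> vec.span {u, v}"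
        by (intro vec.span_add vec.span_scale vec.span_base) auto
      ultimately show "x \<in> vec.span {u, v}" by simp
    qed
  qed
  moreover have "u \<notin> vec.span {v}"
    by (auto simp: vec.span_singleton u_def v_def vec3_eq_iff)
  moreover have "v \<noteq> 0" by (simp add: v_def vec3_eq_iff)
  ultimately have "vec.dim (kernel3 (v3 0 1 c)) = 2"
    by (simp add: vec.dim_insert)
  then show ?thesis using subspace_kernel3 by (simp add: pg_lines_def)
qed

definition normalized :: "'a::field ^ 3 \<Rightarrow> bool" where
  "normalized v \<longleftrightarrow> v$3 = 1 \<or> (v$3 = 0 \<and> v$2 = 1) \<or> (v$3 = 0 \<and> v$2 = 0 \<and> v$1 = 1)"

lemma inj_on_span_normalized:
  assumes "\<forall>v\<in>A. normalized (v :: 'a::field ^ 3)"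
  shows "inj_on (\<lambda>v. vec.span {v}) A"
proof (rule inj_onI)
  fix u v assume uv: "u \<in> A" "v \<in> A" "vec.span {u} = vec.span {v}"
  then have "u \<in> vec.span {v}" using vec.span_base[of u "{u}"] by simp
  then obtain c where c: "u = c *s v" by (auto simp: vec.span_singleton)
  then have "u$1 = c * v$1" "u$2 = c * v$2" "u$3 = c * v$3" by simp_all
  moreover have "normalized u" "normalized v" using assms uv(1,2) by auto
  ultimately have "c = 1" unfolding normalized_def by auto
  with c show "u = v" by simp
qed

lemma span_singleton_subset_kernel3_iff: "vec.span {v} \<subseteq> kernel3 a \<longleftrightarrow> dot3 a v = 0"
proof
  assume "vec.span {v} \<subseteq> kernel3 a"
  then show "dot3 a v = 0" using vec.span_base[of v "{v}"] by (auto simp: kernel3_def)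
next
  assume "dot3 a v = 0"
  then show "vec.span {v} \<subseteq> kernel3 a"
    by (intro vec.span_minimal[OF _ subspace_kernel3]) (simp add: kernel3_def)
qed

lemma is_arc_span_image:
  fixes A :: "('a::field ^ 3) set"
  assumes "finite A" "card A = n" "\<forall>v\<in>A. normalized v"
    and "\<And>a. a \<noteq> 0 \<Longrightarrow> card {v\<in>A. dot3 a v = 0} \<le> r"
    and "kernel3 b \<in> pg_lines" "card {v\<in>A. dot3 b v = 0} = r"
  shows "is_arc n r ((\<lambda>v. vec.span {v}) ` A)"
proof -
  let ?P = "\<lambda>v. vec.span {v}"
  have inj: "inj_on ?P A" by (rule inj_on_span_normalized[OF assms(3)])
  have on_line: "card {P \<in> ?P ` A. P \<subseteq> kernel3 a} = card {v\<in>A. dot3 a v = 0}" for a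
  proof -
    have "{P \<in> ?P ` A. P \<subseteq> kernel3 a} = ?P ` {v\<in>A. dot3 a v = 0}"
      using span_singleton_subset_kernel3_iff by blast
    then show ?thesis
      using inj_on_subset[OF inj] by (simp add: card_image)
  qed
  have "?P ` A \<subseteq> pg_points"
    using assms(3) by (auto simp: pg_points_def normalized_def vec3_eq_iff)
  moreover have "card {P \<in> ?P ` A. P \<subseteq> L} \<le> r" if L: "L \<in> pg_lines" for L
  proof -
    obtain a where "a \<noteq> 0" "L = kernel3 a" using pg_line_eq_kernel3[OF L] .
    then show ?thesis using on_line[of a] assms(4) by simp
  qed
  ultimately show ?thesis
    unfolding is_arc_def using assms on_line[of b] card_image[OF inj] by auto
qed

lemma is_arc_le_m_arc:
  assumes "is_arc n r (B :: ('a::{finite,field} ^ 3) set set)"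
  shows "n \<le> m_arc TYPE('a) r"
proof -
  have "n' \<le> CARD(('a ^ 3) set)" if "is_arc n' r B'" for n' and B' :: "('a ^ 3) set set"
    using that card_mono[of UNIV B'] by (simp add: is_arc_def)
  then have "finite {n. \<exists>B :: ('a ^ 3) set set. is_arc n r B}"
    unfolding finite_nat_set_iff_bounded_le by blast
  with assms show ?thesis
    unfolding m_arc_def by (auto intro: Max_ge)
qed

section \<open>Fields of prime order\<close>

lemma of_nat_CARD_eq_0: "(of_nat CARD('a) :: 'a::{finite,ring_1}) = 0"
proof -
  have "bij ((+) (1::'a))"
    by (rule o_bij[where g = "\<lambda>y. y - 1"]) auto
  then have "(\<Sum>y\<in>UNIV. (1::'a) + y) = (\<Sum>y\<in>UNIV. y)"
    by (rule sum.reindex_bij_betw)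
  then have "of_nat CARD('a) + (\<Sum>y\<in>UNIV. y) = (\<Sum>y\<in>UNIV. y :: 'a)"
    by (simp add: sum.distrib)
  then show ?thesis by simp
qed

lemma of_nat_mod_CARD: "(of_nat (n mod CARD('a)) :: 'a::{finite,ring_1}) = of_nat n"
proof -
  have "(of_nat n :: 'a) = of_nat (CARD('a) * (n div CARD('a)) + n mod CARD('a))"
    by simp
  also have "\<dots> = of_nat (n mod CARD('a))"
    by (simp only: of_nat_add of_nat_mult of_nat_CARD_eq_0) simp
  finally show ?thesis ..
qed

lemma CHAR_eq_CARD_if_prime:
  assumes "prime CARD('a::{finite,ring_1})"
  shows "CHAR('a) = CARD('a)"
proof -
  have "CHAR('a) dvd CARD('a)"
    using of_nat_CARD_eq_0 by (simp add: of_nat_eq_0_iff_char_dvd)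
  with assms show ?thesis
    using CHAR_not_1 by (auto simp: prime_nat_iff)
qed

lemma inj_on_of_nat_CARD:
  assumes "prime CARD('a::{finite,ring_1})"
  shows "inj_on (of_nat :: nat \<Rightarrow> 'a) {..<CARD('a)}"
proof -
  have eq_if_less: "m = n" if "m < n" "n < CARD('a)" "(of_nat m :: 'a) = of_nat n" for m n
  proof -
    have "CARD('a) dvd n - m"
      using that(1,3) of_nat_eq_iff_char_dvd CHAR_eq_CARD_if_prime[OF assms] by metis
    with that(1,2) show ?thesis by (auto dest: dvd_imp_le)
  qed
  show ?thesis
  proof (rule inj_onI)
    fix m n assume "m \<in> {..<CARD('a)}" "n \<in> {..<CARD('a)}" "(of_nat m :: 'a) = of_nat n"
    then show "m = n"
      using eq_if_less[of m n] eq_if_less[of n m] by (cases m n rule: linorder_cases) auto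
  qed
qed

lemma of_nat_CARD_surj:
  assumes "prime CARD('a::{finite,ring_1})"
  shows "(of_nat :: nat \<Rightarrow> 'a) ` {..<CARD('a)} = UNIV"
  using card_image[OF inj_on_of_nat_CARD[OF assms]] by (simp add: card_subset_eq)

lemma of_nat_eq_of_nat_iff_less_CARD:
  assumes "prime CARD('a::{finite,ring_1})" "m < CARD('a)" "n < CARD('a)"
  shows "(of_nat m :: 'a) = of_nat n \<longleftrightarrow> m = n"
  using inj_on_of_nat_CARD[OF assms(1)] assms(2,3) by (auto dest: inj_onD)

lemma of_nat_eq_affine_iff:
  assumes "prime CARD('a::{finite,ring_1})" "x < CARD('a)"
  shows "(of_nat x :: 'a) = of_nat i * of_nat y + of_nat k \<longleftrightarrow> x = (i * y + k) mod CARD('a)"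
proof -
  have "(of_nat i * of_nat y + of_nat k :: 'a) = of_nat ((i * y + k) mod CARD('a))"
    by (simp add: of_nat_mod_CARD)
  with assms show ?thesis
    by (simp add: of_nat_eq_of_nat_iff_less_CARD)
qed

section \<open>Complements of holes in the plane of prime order\<close>

definition hole_arc :: "(nat \<Rightarrow> nat set) \<Rightarrow> nat set \<Rightarrow> ('a::{finite,field} ^ 3) set" where
  "hole_arc H Hinf =
     {v3 (of_nat x) (of_nat y) 1 | x y. x < CARD('a) \<and> y < CARD('a) \<and> x \<notin> H y}
     \<union> {v3 (of_nat x) 1 0 | x. x < CARD('a) \<and> x \<notin> Hinf} \<union> {v3 1 0 0}"

lemma hole_arc_normalized: "\<forall>v \<in> hole_arc H Hinf. normalized v"
  by (auto simp: hole_arc_def normalized_def)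

lemma card_hole_arc:
  assumes "prime CARD('a::{finite,field})"
  shows "card (hole_arc H Hinf :: ('a ^ 3) set) =
    (\<Sum>y<CARD('a). card {x. x < CARD('a) \<and> x \<notin> H y}) + card {x. x < CARD('a) \<and> x \<notin> Hinf} + 1"
proof -
  define affine where "affine = (\<lambda>(y, x). v3 (of_nat x) (of_nat y) (1::'a))"
  define S where "S = (SIGMA y:{..<CARD('a)}. {x. x < CARD('a) \<and> x \<notin> H y})"
  define at_inf where "at_inf = (\<lambda>x. v3 (of_nat x) 1 (0::'a))"
  define T where "T = {x. x < CARD('a) \<and> x \<notin> Hinf}"
  have arc: "(hole_arc H Hinf :: ('a ^ 3) set) = (affine ` S \<union> at_inf ` T) \<union> {v3 1 0 0}"
    unfolding hole_arc_def affine_def S_def at_inf_def T_def by force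
  have "inj_on affine S" "inj_on at_inf T"
    by (auto intro!: inj_onI simp: affine_def S_def at_inf_def T_def
        of_nat_eq_of_nat_iff_less_CARD[OF assms])
  moreover have "card S = (\<Sum>y<CARD('a). card {x. x < CARD('a) \<and> x \<notin> H y})"
    unfolding S_def by (rule card_SigmaI) auto
  moreover have "affine ` S \<inter> at_inf ` T = {}" "v3 1 0 0 \<notin> affine ` S \<union> at_inf ` T"
    by (auto simp: affine_def at_inf_def)
  moreover have "finite S" "finite T" by (auto simp: S_def T_def)
  ultimately show ?thesis
    unfolding arc by (simp add: card_Un_disjoint card_image T_def)
qed

lemma card_hole_arc_on_line_x_eq:
  assumes "prime CARD('a::{finite,field})" "i < CARD('a)"
  shows "card {v \<in> (hole_arc H Hinf :: ('a ^ 3) set). dot3 (v3 1 (- of_nat i) (- of_nat k)) v = 0} =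
    card {y. y < CARD('a) \<and> (i * y + k) mod CARD('a) \<notin> H y} + (if i \<in> Hinf then 0 else 1)"
proof -
  define affine where "affine = (\<lambda>y. v3 (of_nat ((i * y + k) mod CARD('a))) (of_nat y) (1::'a))"
  define S where "S = {y. y < CARD('a) \<and> (i * y + k) mod CARD('a) \<notin> H y}"
  define E where "E = (if i \<in> Hinf then {} else {v3 (of_nat i) 1 (0::'a)})"
  have on_line: "dot3 (v3 1 (- of_nat i) (- of_nat k)) v = 0 \<longleftrightarrow> v$1 = of_nat i * v$2 + of_nat k * v$3"
    for v :: "'a ^ 3"
    by (simp add: dot3_def algebra_simps eq_neg_iff_add_eq_0 flip: diff_eq_eq)
  have "{v \<in> hole_arc H Hinf. dot3 (v3 1 (- of_nat i) (- of_nat k)) v = 0} = affine ` S \<union> E"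
    unfolding on_line hole_arc_def affine_def S_def E_def
    by (auto simp: of_nat_eq_affine_iff[OF assms(1)] of_nat_eq_of_nat_iff_less_CARD[OF assms(1)]
        assms(2) of_nat_mod_CARD)
  moreover have "inj_on affine S"
    by (auto intro!: inj_onI simp: affine_def S_def of_nat_eq_of_nat_iff_less_CARD[OF assms(1)])
  moreover have "affine ` S \<inter> E = {}" by (auto simp: affine_def E_def)
  ultimately show ?thesis
    by (simp add: card_Un_disjoint card_image S_def E_def)
qed

lemma card_hole_arc_on_line_y_eq:
  assumes "prime CARD('a::{finite,field})" "j < CARD('a)"
  shows "card {v \<in> (hole_arc H Hinf :: ('a ^ 3) set). dot3 (v3 0 1 (- of_nat j)) v = 0} =
    card {x. x < CARD('a) \<and> x \<notin> H j} + 1"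
proof -
  define affine where "affine = (\<lambda>x. v3 (of_nat x) (of_nat j) (1::'a))"
  define S where "S = {x. x < CARD('a) \<and> x \<notin> H j}"
  have "{v \<in> hole_arc H Hinf. dot3 (v3 0 1 (- of_nat j)) v = 0} = affine ` S \<union> {v3 1 0 0}"
    unfolding hole_arc_def affine_def S_def
    by (auto simp: of_nat_eq_of_nat_iff_less_CARD[OF assms(1)] assms(2))
  moreover have "inj_on affine S"
    by (auto intro!: inj_onI simp: affine_def S_def of_nat_eq_of_nat_iff_less_CARD[OF assms(1)])
  moreover have "v3 1 0 0 \<notin> affine ` S" by (auto simp: affine_def)
  ultimately show ?thesis
    by (simp add: card_image S_def)
qed

lemma card_hole_arc_on_line_at_infinity:
  assumes "prime CARD('a::{finite,field})"
  shows "card {v \<in> (hole_arc H Hinf :: ('a ^ 3) set). dot3 (v3 0 0 1) v = 0} =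
    card {x. x < CARD('a) \<and> x \<notin> Hinf} + 1"
proof -
  define at_inf where "at_inf = (\<lambda>x. v3 (of_nat x) 1 (0::'a))"
  define T where "T = {x. x < CARD('a) \<and> x \<notin> Hinf}"
  have "{v \<in> hole_arc H Hinf. dot3 (v3 0 0 1) v = 0} = at_inf ` T \<union> {v3 1 0 0}"
    unfolding hole_arc_def at_inf_def T_def by auto
  moreover have "inj_on at_inf T"
    by (auto intro!: inj_onI simp: at_inf_def T_def of_nat_eq_of_nat_iff_less_CARD[OF assms(1)])
  moreover have "v3 1 0 0 \<notin> at_inf ` T" by (auto simp: at_inf_def)
  ultimately show ?thesis
    by (simp add: card_image T_def)
qed

lemma nonzero_form_cases:
  assumes "prime CARD('a::{finite,field})" and "(a :: 'a ^ 3) \<noteq> 0"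
  obtains (line_x) c i k where "c \<noteq> 0" "i < CARD('a)" "k < CARD('a)"
      "a = c *s v3 1 (- of_nat i) (- of_nat k)"
    | (line_y) c j where "c \<noteq> 0" "j < CARD('a)" "a = c *s v3 0 1 (- of_nat j)"
    | (at_infinity) c where "c \<noteq> 0" "a = c *s v3 0 0 1"
proof -
  have surj: "\<exists>n < CARD('a). (of_nat n :: 'a) = z" for z
    using of_nat_CARD_surj[OF assms(1)] by (metis UNIV_I imageE lessThan_iff)
  consider "a$1 \<noteq> 0" | "a$1 = 0" "a$2 \<noteq> 0" | "a$1 = 0" "a$2 = 0" "a$3 \<noteq> 0"
    using nonzero_vec3_cases[OF assms(2)] by blast
  then show thesis
  proof cases
    case 1
    obtain i k where "i < CARD('a)" "k < CARD('a)"
      "(of_nat i :: 'a) = - a$2 / a$1" "(of_nat k :: 'a) = - a$3 / a$1"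
      using surj by meson
    with 1 show thesis by (intro line_x[of "a$1" i k]) (simp_all add: vec3_eq_iff)
  next
    case 2
    obtain j where "j < CARD('a)" "(of_nat j :: 'a) = - a$3 / a$2"
      using surj by meson
    with 2 show thesis by (intro line_y[of "a$2" j]) (simp_all add: vec3_eq_iff)
  next
    case 3
    then show thesis by (intro at_infinity[of "a$3"]) (simp_all add: vec3_eq_iff)
  qed
qed

lemma card_hole_arc_on_line_le:
  fixes a :: "'a::{finite,field} ^ 3"
  assumes "prime CARD('a)" and "a \<noteq> 0"
    and "\<And>i k. i < CARD('a) \<Longrightarrow> k < CARD('a) \<Longrightarrow>
      card {y. y < CARD('a) \<and> (i * y + k) mod CARD('a) \<notin> H y} + (if i \<in> Hinf then 0 else 1) \<le> r"
    and "\<And>j. j < CARD('a) \<Longrightarrow> card {x. x < CARD('a) \<and> x \<notin> H j} + 1 \<le> r"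
    and "card {x. x < CARD('a) \<and> x \<notin> Hinf} + 1 \<le> r"
  shows "card {v \<in> hole_arc H Hinf. dot3 a v = 0} \<le> r"
proof -
  have scale: "{v \<in> hole_arc H Hinf. dot3 (c *s b) v = 0} = {v \<in> hole_arc H Hinf. dot3 b v = 0}"
    if "c \<noteq> 0" for c and b :: "'a ^ 3"
    using that by (simp add: dot3_scale_left)
  from assms(1,2) show ?thesis
  proof (cases rule: nonzero_form_cases)
    case (line_x c i k)
    then show ?thesis using scale card_hole_arc_on_line_x_eq[OF assms(1)] assms(3) by simp
  next
    case (line_y c j)
    then show ?thesis using scale card_hole_arc_on_line_y_eq[OF assms(1)] assms(4) by simp
  next
    case (at_infinity c)
    then show ?thesis using scale card_hole_arc_on_line_at_infinity[OF assms(1)] assms(5) by simp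
  qed
qed

section \<open>The arc in PG(2, 29)\<close>

definition holes29_list :: "nat list list" where
  "holes29_list = [[5, 15, 18, 19, 21, 22], [11, 15, 19, 23, 25, 26], [0, 2, 12, 17, 18, 23, 25],
    [8, 9, 10, 18, 27], [0, 2, 6, 7, 14], [2, 3, 6, 20, 23, 25], [0, 4, 10, 14, 15, 26],
    [3, 6, 7, 14, 26], [8, 9, 18, 21, 23, 26, 28], [10, 15, 19, 20, 22], [12, 17, 21, 26, 28],
    [1, 4, 14, 17, 27], [4, 5, 6, 11, 16, 24, 25], [8, 9, 10, 17, 18, 24], [5, 9, 13, 16, 20],
    [1, 2, 13, 17, 22], [20, 21, 22, 24, 28], [5, 9, 14, 25, 26], [0, 6, 11, 22, 27, 28],
    [1, 4, 7, 16, 17, 19, 27], [3, 5, 8, 16, 19, 23], [0, 5, 11, 12, 13, 23], [3, 6, 7, 10, 12, 16],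
    [1, 7, 9, 12, 15, 20, 24], [4, 11, 16, 18, 19, 24], [1, 8, 11, 13, 24, 28],
    [0, 1, 2, 3, 15, 26, 27], [7, 15, 17, 21, 24], [4, 11, 13, 19, 21]]"

definition holes29 :: "nat \<Rightarrow> nat set" where
  "holes29 y = set (holes29_list ! y)"

definition holes29_inf :: "nat set" where
  "holes29_inf = {2, 4, 6, 18, 21, 26}"

lemma card_less_conv_length_filter_zip:
  "card {y. y < length xs \<and> P (int y) (xs ! y)} =
    length (filter (\<lambda>(y, h). P y h) (zip (map int [0..<length xs]) xs))"
  by (simp add: zip_map1 filter_map o_def length_filter_conv_card case_prod_beta cong: conj_cong)

text \<open>Stated over int because code_simp evaluates mod on int numerals far faster than on nat.\<close>

lemma card_mod_notin_conv_length_filter_int: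
  fixes hs :: "nat list list"
  shows "card {y. y < length hs \<and> (i * y + k) mod p \<notin> set (hs ! y)} =
    length (filter (\<lambda>(y, h). (int i * y + int k) mod int p \<notin> set h)
      (zip (map int [0..<length hs]) (map (map int) hs)))"
proof -
  have "(i * y + k) mod p \<notin> set (hs ! y) \<longleftrightarrow>
      (int i * int y + int k) mod int p \<notin> set (map (map int) hs ! y)" if "y < length hs" for y
  proof -
    have "int ((i * y + k) mod p) = (int i * int y + int k) mod int p" by (simp add: zmod_int)
    with that show ?thesis by (simp add: image_iff) (metis of_nat_eq_iff)
  qed
  then show ?thesis
    using card_less_conv_length_filter_zip[of "map (map int) hs"
        "\<lambda>y h. (int i * y + int k) mod int p \<notin> set h"]
    by (simp cong: conj_cong)
qed

lemma holes29_line_x_bound: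
  assumes "i < 29" "k < 29"
  shows "card {y. y < 29 \<and> (i * y + k) mod 29 \<notin> holes29 y} + (if i \<in> holes29_inf then 0 else 1) \<le> 25"
proof -
  let ?ints = "map int [0..<29]"
  have "list_all (\<lambda>i. list_all (\<lambda>k.
      length (filter (\<lambda>(y, h). (i * y + k) mod 29 \<notin> set h) (zip ?ints (map (map int) holes29_list)))
        + (if i \<in> int ` holes29_inf then 0 else 1) \<le> 25) ?ints) ?ints"
    unfolding holes29_list_def holes29_inf_def by code_simp
  moreover have "length holes29_list = 29" by (simp add: holes29_list_def)
  ultimately show ?thesis
    using assms card_mod_notin_conv_length_filter_int[where hs = holes29_list and i = i and k = k and p = 29]
    by (simp add: list_all_iff holes29_def image_iff)
qed

lemma prime_29: "prime (29::nat)"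
  unfolding prime_nat_iff' by code_simp

lemma card_less_conv_length_filter: "card {x. x < n \<and> P x} = length (filter P [0..<n])"
  by (simp add: length_filter_conv_card cong: conj_cong)

lemma holes29_line_y_bound:
  assumes "j < 29"
  shows "card {x. x < 29 \<and> x \<notin> holes29 j} + 1 \<le> 25"
proof -
  have "list_all (\<lambda>j. length (filter (\<lambda>x. x \<notin> holes29 j) [0..<29]) + 1 \<le> 25) [0..<29]"
    unfolding holes29_def holes29_list_def by code_simp
  with assms show ?thesis by (simp add: list_all_iff card_less_conv_length_filter)
qed

lemma holes29_line_y_3: "card {x. x < 29 \<and> x \<notin> holes29 3} + 1 = 25"
  unfolding card_less_conv_length_filter holes29_def holes29_list_def by code_simp

lemma holes29_line_at_infinity_bound: "card {x. x < 29 \<and> x \<notin> holes29_inf} + 1 \<le> 25"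
  unfolding card_less_conv_length_filter holes29_inf_def by code_simp

lemma holes29_size:
  "(\<Sum>y<29. card {x. x < 29 \<and> x \<notin> holes29 y}) + card {x. x < 29 \<and> x \<notin> holes29_inf} + 1 = 697"
  unfolding card_less_conv_length_filter lessThan_atLeast0 atLeastLessThan_upt sum_set_upt_conv_sum_list_nat
    holes29_def holes29_list_def holes29_inf_def by code_simp

theorem mainTheorem15:
  assumes "CARD('a::{finite,field}) = 29"
  shows "(\<exists>B :: ('a ^ 3) set set. is_arc 697 25 B) \<and> 697 \<le> m_arc TYPE('a) 25"
proof -
  have p: "prime CARD('a)" using assms prime_29 by simp
  let ?A = "hole_arc holes29 holes29_inf :: ('a ^ 3) set"
  have "is_arc 697 25 ((\<lambda>v. vec.span {v}) ` ?A)"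
  proof (rule is_arc_span_image)
    show "card ?A = 697" using card_hole_arc[OF p] holes29_size assms by simp
    show "card {v \<in> ?A. dot3 a v = 0} \<le> 25" if "a \<noteq> 0" for a
      using card_hole_arc_on_line_le[OF p that] holes29_line_x_bound holes29_line_y_bound holes29_line_at_infinity_bound assms
      by simp
    show "card {v \<in> ?A. dot3 (v3 0 1 (- of_nat 3)) v = 0} = 25"
      using card_hole_arc_on_line_y_eq[OF p, of 3] holes29_line_y_3 assms by simp
  qed (simp_all add: hole_arc_normalized kernel3_v3_0_1_in_pg_lines)
  then show ?thesis using is_arc_le_m_arc by blast
qed

end
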